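(* Let $G$ be a finite semi-3-abelian 3-group and let $x\in\Omega_{1}(G)$. Then for all $a,b\in G$, $$[x,b,a]\,[x,a,b]=1.$$
   Context: A finite 3-group $G$ is semi-3-abelian if for all $a,b\in G$: $(ab)^{3}=1$ if and only if $a^{3}b^{3}=1$. $\Omega_{1}(G)=\langle g\in G : g^{3}=1\rangle$. Commutators: $[x,y]=x^{-1}y^{-1}xy$, and left-normed $[x_1,\dots,x_n]=[[x_1,\dots,x_{n-1}],x_n]$. *)

theory Defs
  imports "HOL-Algebra.Algebra"
begin

definition is_p_group :: "nat \<Rightarrow> ('a, 'b) monoid_scheme \<Rightarrow> bool" where
  "is_p_group p G \<longleftrightarrow> group G \<and> finite (carrier G) \<and> (\<exists>n. order G = p ^ n)"

definition semi_p_abelian :: "nat \<Rightarrow> ('a, 'b) monoid_scheme \<Rightarrow> bool" where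
  "semi_p_abelian p G \<longleftrightarrow>
     (\<forall>a\<in>carrier G. \<forall>b\<in>carrier G.
        (a \<otimes>\<^bsub>G\<^esub> b) [^]\<^bsub>G\<^esub> p = \<one>\<^bsub>G\<^esub> \<longleftrightarrow>
        (a [^]\<^bsub>G\<^esub> p) \<otimes>\<^bsub>G\<^esub> (b [^]\<^bsub>G\<^esub> p) = \<one>\<^bsub>G\<^esub>)"

definition Omega1 :: "nat \<Rightarrow> ('a, 'b) monoid_scheme \<Rightarrow> 'a set" where
  "Omega1 p G = generate G {g \<in> carrier G. g [^]\<^bsub>G\<^esub> p = \<one>\<^bsub>G\<^esub>}"

definition comm :: "('a, 'b) monoid_scheme \<Rightarrow> 'a \<Rightarrow> 'a \<Rightarrow> 'a" where
  "comm G x y = inv\<^bsub>G\<^esub> x \<otimes>\<^bsub>G\<^esub> inv\<^bsub>G\<^esub> y \<otimes>\<^bsub>G\<^esub> x \<otimes>\<^bsub>G\<^esub> y"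

definition comm3 :: "('a, 'b) monoid_scheme \<Rightarrow> 'a \<Rightarrow> 'a \<Rightarrow> 'a \<Rightarrow> 'a" where
  "comm3 G x y z = comm G (comm G x y) z"

end

theory Submission
  imports Defs
begin

text \<open>
  In a semi-3-abelian group the elements of order dividing 3 form a subgroup, and for such y
  and any g, comparing (g y)^3 = g^3 y^(g^2) y^g y with (g y)^3 = g^3 (semi-3-abelianity applied
  to g y and g^-1) gives y^(g^2) y^g y = 1. Hence y commutes with its conjugates, and the normal
  closure N of x is an abelian group of exponent 3 on which conjugation by any g is an
  automorphism T with 1 + T + T^2 = 0, i.e. (T - 1)^2 = 0 in characteristic 3.

  Let a and b act on N by T_a, T_b and put alpha = T_a - 1, beta = T_b - 1; the claim is
  (alpha beta + beta alpha) x = 0. The identities for a, b, ab, a^-1 b and a b^-1 give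
  alpha^2 = beta^2 = 0 and (alpha + beta + beta alpha)^2 = (-alpha + beta - beta alpha)^2 =
  (alpha - beta - beta alpha)^2 = 0. Expanded, this is a linear system over Z/3 in
  alpha beta + beta alpha, alpha beta alpha, beta alpha beta and beta alpha beta alpha, whose
  solution forces alpha beta + beta alpha = 0.
\<close>

text \<open>For an endomorphism T of an abelian group written multiplicatively, deviation G T is
  T - 1, square_trivial G f says f^2 = 0 and norm_trivial G T says 1 + T + T^2 = 0.\<close>

definition deviation :: "('a, 'b) monoid_scheme \<Rightarrow> ('a \<Rightarrow> 'a) \<Rightarrow> 'a \<Rightarrow> 'a" where
  "deviation G T y = inv\<^bsub>G\<^esub> y \<otimes>\<^bsub>G\<^esub> T y"

definition square_trivial :: "('a, 'b) monoid_scheme \<Rightarrow> ('a \<Rightarrow> 'a) \<Rightarrow> bool" where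
  "square_trivial G f \<longleftrightarrow> (\<forall>y \<in> carrier G. f (f y) = \<one>\<^bsub>G\<^esub>)"

definition norm_trivial :: "('a, 'b) monoid_scheme \<Rightarrow> ('a \<Rightarrow> 'a) \<Rightarrow> bool" where
  "norm_trivial G T \<longleftrightarrow> (\<forall>y \<in> carrier G. T (T y) \<otimes>\<^bsub>G\<^esub> T y \<otimes>\<^bsub>G\<^esub> y = \<one>\<^bsub>G\<^esub>)"

lemma square_trivial_cong:
  assumes "\<And>y. y \<in> carrier G \<Longrightarrow> f y = g y" "\<And>y. y \<in> carrier G \<Longrightarrow> g y \<in> carrier G"
    and "square_trivial G g"
  shows "square_trivial G f"
  using assms by (simp add: square_trivial_def)

lemma norm_trivial_cong:
  assumes "\<And>y. y \<in> carrier G \<Longrightarrow> T y = T' y" "\<And>y. y \<in> carrier G \<Longrightarrow> T' y \<in> carrier G"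
    and "norm_trivial G T'"
  shows "norm_trivial G T"
  using assms by (simp add: norm_trivial_def)

lemma (in group) deviation_subgroup:
  "subgroup H G \<Longrightarrow> y \<in> H \<Longrightarrow> deviation (G\<lparr>carrier := H\<rparr>) T y = deviation G T y"
  by (simp add: deviation_def)

locale exp3_comm_group = comm_group +
  assumes cube_one: "z \<in> carrier G \<Longrightarrow> z \<otimes> z \<otimes> z = \<one>"
begin

lemma cube_cancel: "z \<in> carrier G \<Longrightarrow> w \<in> carrier G \<Longrightarrow> z \<otimes> (z \<otimes> (z \<otimes> w)) = w"
  by (simp add: cube_one flip: m_assoc)

lemma inv_eq_square: "z \<in> carrier G \<Longrightarrow> inv z = z \<otimes> z"
  by (metis cube_one inv_char m_closed m_comm)

lemma square_eq_one_iff: "z \<in> carrier G \<Longrightarrow> z \<otimes> z = \<one> \<longleftrightarrow> z = \<one>"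
  by (metis cube_one l_one one_closed)

lemma cube_one_right: "z \<in> carrier G \<Longrightarrow> z \<otimes> (z \<otimes> z) = \<one>"
  by (simp add: cube_one flip: m_assoc)

lemmas exp3_simps = hom_in_carrier hom_mult inv_eq_square cube_one_right cube_cancel m_ac

lemma linear_system_solution:
  assumes c: "s \<in> carrier G" "t \<in> carrier G" "u \<in> carrier G" "v \<in> carrier G"
    and 1: "s \<otimes> t \<otimes> u \<otimes> v = \<one>"
    and 2: "inv s \<otimes> t \<otimes> inv u \<otimes> v = \<one>"
    and 3: "inv s \<otimes> inv t \<otimes> u \<otimes> v = \<one>"
  shows "t \<otimes> v = \<one>" and "u \<otimes> v = \<one>"
proof -
  have "(t \<otimes> v) \<otimes> (t \<otimes> v) = (s \<otimes> t \<otimes> u \<otimes> v) \<otimes> (inv s \<otimes> t \<otimes> inv u \<otimes> v)"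
    using c by (simp add: exp3_simps)
  then show "t \<otimes> v = \<one>" using 1 2 c by (metis square_eq_one_iff m_closed)
  have "(u \<otimes> v) \<otimes> (u \<otimes> v) = (s \<otimes> t \<otimes> u \<otimes> v) \<otimes> (inv s \<otimes> inv t \<otimes> u \<otimes> v)"
    using c by (simp add: exp3_simps)
  then show "u \<otimes> v = \<one>" using 1 3 c by (metis square_eq_one_iff m_closed)
qed

lemma deviation_closed: "T \<in> hom G G \<Longrightarrow> y \<in> carrier G \<Longrightarrow> deviation G T y \<in> carrier G"
  by (simp add: deviation_def hom_in_carrier)

lemma deviation_hom: "T \<in> hom G G \<Longrightarrow> deviation G T \<in> hom G G"
  by (auto intro!: homI simp: deviation_def exp3_simps)

lemma deviation_comp:
  assumes "U \<in> hom G G" "W \<in> hom G G" "y \<in> carrier G"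
  shows "deviation G (U \<circ> W) y = deviation G W y \<otimes> deviation G U y \<otimes> deviation G U (deviation G W y)"
  using assms by (simp add: deviation_def exp3_simps)

lemma square_trivial_deviation:
  assumes "T \<in> hom G G" "norm_trivial G T"
  shows "square_trivial G (deviation G T)"
  using assms unfolding square_trivial_def norm_trivial_def
  by (auto simp: deviation_def exp3_simps)

lemma deviation_inverse:
  assumes W: "W \<in> hom G G" "W' \<in> hom G G" and WW': "\<And>y. y \<in> carrier G \<Longrightarrow> W (W' y) = y"
    and sq: "square_trivial G (deviation G W)" and y: "y \<in> carrier G"
  shows "deviation G W' y = inv (deviation G W y)"
proof -
  have z: "W' y \<in> carrier G" using W y by (simp add: hom_in_carrier)
  have "deviation G W (deviation G W (W' y)) = \<one>"
    using sq z W unfolding square_trivial_def by (simp add: deviation_closed)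
  then have "W' y \<otimes> (y \<otimes> W y) = \<one>"
    using W y z by (simp add: deviation_def WW' exp3_simps)
  then have "W' y = inv (y \<otimes> W y)"
    using W y z by (intro inv_equality[symmetric]) (simp_all add: hom_in_carrier)
  then show ?thesis
    using W y z by (simp add: deviation_def exp3_simps)
qed

lemma anticommute_if_square_trivial:
  assumes \<alpha>: "\<alpha> \<in> hom G G" and \<beta>: "\<beta> \<in> hom G G"
    and \<alpha>\<alpha>: "square_trivial G \<alpha>" and \<beta>\<beta>: "square_trivial G \<beta>"
    and sq1: "square_trivial G (\<lambda>y. \<alpha> y \<otimes> \<beta> y \<otimes> \<beta> (\<alpha> y))"
    and sq2: "square_trivial G (\<lambda>y. inv (\<alpha> y) \<otimes> \<beta> y \<otimes> \<beta> (inv (\<alpha> y)))"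
    and sq3: "square_trivial G (\<lambda>y. \<alpha> y \<otimes> inv (\<beta> y) \<otimes> inv (\<beta> (\<alpha> y)))"
    and y: "y \<in> carrier G"
  shows "\<alpha> (\<beta> y) \<otimes> \<beta> (\<alpha> y) = \<one>"
proof -
  note nil = \<alpha>\<alpha>[unfolded square_trivial_def, rule_format] \<beta>\<beta>[unfolded square_trivial_def, rule_format]
  \<comment> \<open>With s = \<alpha>\<beta> + \<beta>\<alpha>, t = \<alpha>\<beta>\<alpha>, u = \<beta>\<alpha>\<beta>, v = \<beta>\<alpha>\<beta>\<alpha>, the three squares expand to
    s + t + u + v, -s + t - u + v and -s - t + u + v.\<close>
  have eqs: "\<alpha> (\<beta> (\<alpha> z)) \<otimes> \<beta> (\<alpha> (\<beta> (\<alpha> z))) = \<one> \<and>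
             \<beta> (\<alpha> (\<beta> z)) \<otimes> \<beta> (\<alpha> (\<beta> (\<alpha> z))) = \<one>"
    if z: "z \<in> carrier G" for z
  proof -
    have c: "\<alpha> (\<beta> z) \<otimes> \<beta> (\<alpha> z) \<in> carrier G" "\<alpha> (\<beta> (\<alpha> z)) \<in> carrier G"
      "\<beta> (\<alpha> (\<beta> z)) \<in> carrier G" "\<beta> (\<alpha> (\<beta> (\<alpha> z))) \<in> carrier G"
      using z \<alpha> \<beta> by (simp_all add: hom_in_carrier)
    have "\<alpha> (\<beta> z) \<otimes> \<beta> (\<alpha> z) \<otimes> \<alpha> (\<beta> (\<alpha> z)) \<otimes> \<beta> (\<alpha> (\<beta> z)) \<otimes> \<beta> (\<alpha> (\<beta> (\<alpha> z))) = \<one>"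
      using sq1[unfolded square_trivial_def, rule_format, OF z] z \<alpha> \<beta> by (simp add: nil exp3_simps)
    moreover have "inv (\<alpha> (\<beta> z) \<otimes> \<beta> (\<alpha> z)) \<otimes> \<alpha> (\<beta> (\<alpha> z)) \<otimes> inv (\<beta> (\<alpha> (\<beta> z))) \<otimes> \<beta> (\<alpha> (\<beta> (\<alpha> z))) = \<one>"
      using sq2[unfolded square_trivial_def, rule_format, OF z] z \<alpha> \<beta> by (simp add: nil exp3_simps)
    moreover have "inv (\<alpha> (\<beta> z) \<otimes> \<beta> (\<alpha> z)) \<otimes> inv (\<alpha> (\<beta> (\<alpha> z))) \<otimes> \<beta> (\<alpha> (\<beta> z)) \<otimes> \<beta> (\<alpha> (\<beta> (\<alpha> z))) = \<one>"
      using sq3[unfolded square_trivial_def, rule_format, OF z] z \<alpha> \<beta> by (simp add: nil exp3_simps)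
    ultimately show ?thesis
      using linear_system_solution[OF c] by blast
  qed
  \<comment> \<open>At \<alpha> y every term ending in \<alpha> vanishes and the second identity reads v y = 0.\<close>
  have "\<beta> (\<alpha> (\<beta> (\<alpha> y))) = \<one>"
    using eqs[of "\<alpha> y"] y \<alpha> \<beta> by (simp add: nil hom_in_carrier hom_one)
  then show ?thesis
    using sq1[unfolded square_trivial_def, rule_format, OF y] eqs[OF y] y \<alpha> \<beta> by (simp add: nil exp3_simps)
qed

lemma deviations_anticommute:
  assumes A: "A \<in> hom G G" "A' \<in> hom G G" "\<And>y. y \<in> carrier G \<Longrightarrow> A (A' y) = y"
    and B: "B \<in> hom G G" "B' \<in> hom G G" "\<And>y. y \<in> carrier G \<Longrightarrow> B (B' y) = y"
    and norm: "norm_trivial G A" "norm_trivial G B"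
      "norm_trivial G (B \<circ> A)" "norm_trivial G (B \<circ> A')" "norm_trivial G (B' \<circ> A)"
    and y: "y \<in> carrier G"
  shows "deviation G A (deviation G B y) \<otimes> deviation G B (deviation G A y) = \<one>"
proof (rule anticommute_if_square_trivial)
  have sqA: "square_trivial G (deviation G A)" and sqB: "square_trivial G (deviation G B)"
    using A B norm by (simp_all add: square_trivial_deviation)
  then show "square_trivial G (deviation G A)" "square_trivial G (deviation G B)" .
  note comps = Group.hom_compose[OF A(1) B(1)] Group.hom_compose[OF A(2) B(1)] Group.hom_compose[OF A(1) B(2)]
  show "deviation G A \<in> hom G G" "deviation G B \<in> hom G G"
    using A B by (simp_all add: deviation_hom)
  show "square_trivial G (\<lambda>y. deviation G A y \<otimes> deviation G B y \<otimes> deviation G B (deviation G A y))"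
    by (rule square_trivial_cong[where g = "deviation G (B \<circ> A)"])
      (use A B norm comps in \<open>simp_all add: deviation_comp deviation_closed square_trivial_deviation\<close>)
  show "square_trivial G (\<lambda>y. inv (deviation G A y) \<otimes> deviation G B y \<otimes> deviation G B (inv (deviation G A y)))"
    by (rule square_trivial_cong[where g = "deviation G (B \<circ> A')"])
      (use A B norm comps sqA in \<open>simp_all add: deviation_comp deviation_inverse deviation_closed square_trivial_deviation\<close>)
  show "square_trivial G (\<lambda>y. deviation G A y \<otimes> inv (deviation G B y) \<otimes> inv (deviation G B (deviation G A y)))"
    by (rule square_trivial_cong[where g = "deviation G (B' \<circ> A)"])
      (use A B norm comps sqB in \<open>simp_all add: deviation_comp deviation_inverse deviation_closed square_trivial_deviation\<close>)
qed (rule y)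

end

definition rconj :: "('a, 'b) monoid_scheme \<Rightarrow> 'a \<Rightarrow> 'a \<Rightarrow> 'a" where
  "rconj G y g = inv\<^bsub>G\<^esub> g \<otimes>\<^bsub>G\<^esub> y \<otimes>\<^bsub>G\<^esub> g"

context group
begin

lemma inv_cancel_left:
  "x \<in> carrier G \<Longrightarrow> w \<in> carrier G \<Longrightarrow> x \<otimes> (inv x \<otimes> w) = w"
  "x \<in> carrier G \<Longrightarrow> w \<in> carrier G \<Longrightarrow> inv x \<otimes> (x \<otimes> w) = w"
  by (simp_all flip: m_assoc)

lemma rconj_closed [simp]: "y \<in> carrier G \<Longrightarrow> g \<in> carrier G \<Longrightarrow> rconj G y g \<in> carrier G"
  by (simp add: rconj_def)

lemma rconj_mult:
  "y \<in> carrier G \<Longrightarrow> z \<in> carrier G \<Longrightarrow> g \<in> carrier G \<Longrightarrow> rconj G (y \<otimes> z) g = rconj G y g \<otimes> rconj G z g"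
  by (simp add: rconj_def m_assoc inv_cancel_left)

lemma rconj_inv: "y \<in> carrier G \<Longrightarrow> g \<in> carrier G \<Longrightarrow> rconj G (inv y) g = inv (rconj G y g)"
  by (simp add: rconj_def m_assoc inv_mult_group)

lemma rconj_rconj:
  "y \<in> carrier G \<Longrightarrow> g \<in> carrier G \<Longrightarrow> h \<in> carrier G \<Longrightarrow> rconj G (rconj G y g) h = rconj G y (g \<otimes> h)"
  by (simp add: rconj_def m_assoc inv_mult_group)

lemma rconj_one [simp]: "y \<in> carrier G \<Longrightarrow> rconj G y \<one> = y"
  by (simp add: rconj_def)

lemma comm_eq_deviation: "y \<in> carrier G \<Longrightarrow> g \<in> carrier G \<Longrightarrow> comm G y g = deviation G (\<lambda>z. rconj G z g) y"
  by (simp add: comm_def deviation_def rconj_def m_assoc)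

lemma cube_mult_eq:
  assumes "g \<in> carrier G" "y \<in> carrier G"
  shows "(g \<otimes> y) \<otimes> (g \<otimes> y) \<otimes> (g \<otimes> y) =
         (g \<otimes> g \<otimes> g) \<otimes> (rconj G (rconj G y g) g \<otimes> rconj G y g \<otimes> y)"
  using assms by (simp add: rconj_def m_assoc inv_cancel_left)

lemma commutes_generate:
  assumes z: "z \<in> carrier G" and S: "S \<subseteq> carrier G"
    and comm: "\<And>s. s \<in> S \<Longrightarrow> s \<otimes> z = z \<otimes> s" and n: "n \<in> generate G S"
  shows "n \<otimes> z = z \<otimes> n"
  using n
proof (induction rule: generate.induct)
  case (inv h)
  then have h: "h \<in> carrier G" using S by auto
  have "inv h \<otimes> (h \<otimes> z) \<otimes> inv h = inv h \<otimes> (z \<otimes> h) \<otimes> inv h" using comm[OF inv] by simp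
  then show ?case using h z by (simp add: m_assoc inv_cancel_left)
next
  case (eng h1 h2)
  then have h: "h1 \<in> carrier G" "h2 \<in> carrier G" using generate_incl[OF S] by auto
  then have "h1 \<otimes> h2 \<otimes> z = h1 \<otimes> z \<otimes> h2" using eng.IH(2) z by (simp add: m_assoc)
  also have "\<dots> = z \<otimes> (h1 \<otimes> h2)" using eng.IH(1) h z by (simp add: m_assoc)
  finally show ?case .
qed (use z comm in auto)

lemma rconj_generate:
  assumes S: "S \<subseteq> carrier G" and closed: "\<And>s. s \<in> S \<Longrightarrow> rconj G s g \<in> S"
    and g: "g \<in> carrier G" and n: "n \<in> generate G S"
  shows "rconj G n g \<in> generate G S"
  using n
proof (induction rule: generate.induct)
  case one then show ?case using g by (simp add: rconj_def generate.one)
next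
  case (incl h) then show ?case using closed by (simp add: generate.incl)
next
  case (inv h)
  then have "inv (rconj G h g) \<in> generate G S" using closed by (simp add: generate.inv)
  then show ?case using inv S g by (auto simp: rconj_inv)
next
  case (eng h1 h2)
  then have "h1 \<in> carrier G" "h2 \<in> carrier G" using generate_incl[OF S] by auto
  with eng g show ?case by (simp add: rconj_mult generate.eng)
qed

definition normal_closure :: "'a \<Rightarrow> 'a set" where
  "normal_closure x = generate G ((\<lambda>g. rconj G x g) ` carrier G)"

lemma subgroup_normal_closure: "x \<in> carrier G \<Longrightarrow> subgroup (normal_closure x) G"
  by (auto simp: normal_closure_def intro: generate_is_subgroup)

lemma mem_normal_closure: "x \<in> carrier G \<Longrightarrow> x \<in> normal_closure x"
  unfolding normal_closure_def by (rule generate.incl) (force intro: rev_image_eqI[of \<one>])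

lemma rconj_normal_closure:
  assumes "x \<in> carrier G" "n \<in> normal_closure x" "g \<in> carrier G"
  shows "rconj G n g \<in> normal_closure x"
  using assms unfolding normal_closure_def
  by (intro rconj_generate) (auto simp: rconj_rconj)

end

locale semi_3_abelian_group = group +
  assumes semi_3_abelian: "semi_p_abelian 3 G"
begin

definition cube_roots :: "'a set" where
  "cube_roots = {g \<in> carrier G. g \<otimes> g \<otimes> g = \<one>}"

lemma cube_roots_carrier: "y \<in> cube_roots \<Longrightarrow> y \<in> carrier G"
  by (simp add: cube_roots_def)

lemma cube_mult_iff:
  "a \<in> carrier G \<Longrightarrow> b \<in> carrier G \<Longrightarrow>
   (a \<otimes> b) \<otimes> (a \<otimes> b) \<otimes> (a \<otimes> b) = \<one> \<longleftrightarrow> (a \<otimes> a \<otimes> a) \<otimes> (b \<otimes> b \<otimes> b) = \<one>"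
  using semi_3_abelian by (simp add: semi_p_abelian_def numeral_3_eq_3)

lemma subgroup_cube_roots: "subgroup cube_roots G"
proof (rule subgroupI)
  fix y assume y: "y \<in> cube_roots"
  then have "inv y \<otimes> inv y \<otimes> inv y = inv (y \<otimes> y \<otimes> y)"
    by (simp add: cube_roots_carrier inv_mult_group m_assoc)
  with y show "inv y \<in> cube_roots" by (simp add: cube_roots_def)
qed (auto simp: cube_roots_def cube_mult_iff)

lemma Omega1_subset_cube_roots: "Omega1 3 G \<subseteq> cube_roots"
  unfolding Omega1_def
  by (rule generate_subgroup_incl[OF _ subgroup_cube_roots]) (auto simp: cube_roots_def numeral_3_eq_3)

lemma norm_rconj_trivial:
  assumes y: "y \<in> cube_roots" and g: "g \<in> carrier G"
  shows "rconj G (rconj G y g) g \<otimes> rconj G y g \<otimes> y = \<one>"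
proof -
  have yc: "y \<in> carrier G" using y by (rule cube_roots_carrier)
  have "(g \<otimes> y \<otimes> inv g) \<otimes> (g \<otimes> y \<otimes> inv g) \<otimes> (g \<otimes> y \<otimes> inv g) = g \<otimes> (y \<otimes> y \<otimes> y) \<otimes> inv g"
    using yc g by (simp add: m_assoc inv_cancel_left)
  then have "(g \<otimes> y) \<otimes> (g \<otimes> y) \<otimes> (g \<otimes> y) \<otimes> (inv g \<otimes> inv g \<otimes> inv g) = \<one>"
    using cube_mult_iff[of "g \<otimes> y" "inv g"] y yc g by (simp add: cube_roots_def)
  moreover have "inv g \<otimes> inv g \<otimes> inv g = inv (g \<otimes> g \<otimes> g)"
    using g by (simp add: inv_mult_group m_assoc)
  ultimately have "(g \<otimes> g \<otimes> g) \<otimes> (rconj G (rconj G y g) g \<otimes> rconj G y g \<otimes> y) \<otimes> inv (g \<otimes> g \<otimes> g) = \<one>"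
    by (simp only: cube_mult_eq[OF g yc])
  then show ?thesis
    using yc g by (simp add: inv_solve_right')
qed

lemma commutes_rconj:
  assumes y: "y \<in> cube_roots" and g: "g \<in> carrier G"
  shows "rconj G y g \<otimes> y = y \<otimes> rconj G y g"
proof -
  define u where "u = rconj G y g"
  define w where "w = rconj G u g"
  have yc: "y \<in> carrier G" using y by (rule cube_roots_carrier)
  have uc: "u \<in> carrier G" and wc: "w \<in> carrier G" using yc g by (simp_all add: u_def w_def)
  have "w \<otimes> (u \<otimes> y) = \<one>"
    using norm_rconj_trivial[OF y g] yc g by (simp add: u_def w_def m_assoc)
  then have "inv (u \<otimes> y) = w" using uc yc wc by (intro inv_equality) auto
  then have uy: "u \<otimes> y = inv w" using uc yc by (metis inv_inv m_closed)
  have "inv w \<otimes> inv u \<otimes> inv y = \<one>"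
    using norm_rconj_trivial[OF subgroup.m_inv_closed[OF subgroup_cube_roots y] g] yc g
    by (simp add: rconj_inv u_def w_def)
  then have "inv (y \<otimes> u \<otimes> w) = \<one>" using yc uc wc by (simp add: inv_mult_group m_assoc)
  then have "(y \<otimes> u) \<otimes> w = \<one>" using yc uc wc by (metis inv_inv inv_one m_closed)
  then have "inv w = y \<otimes> u" using uc yc wc by (intro inv_equality) auto
  with uy show ?thesis by (simp add: u_def)
qed

lemma rconjs_commute:
  assumes x: "x \<in> cube_roots" and g: "g \<in> carrier G" and h: "h \<in> carrier G"
  shows "rconj G x g \<otimes> rconj G x h = rconj G x h \<otimes> rconj G x g"
proof -
  have xc: "x \<in> carrier G" using x by (rule cube_roots_carrier)
  have k: "h \<otimes> inv g \<in> carrier G" using g h by simp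
  have "rconj G x h = rconj G (rconj G x (h \<otimes> inv g)) g"
    using xc g h by (simp add: rconj_rconj m_assoc)
  with commutes_rconj[OF x k] show ?thesis
    using xc g k by (metis rconj_mult rconj_closed)
qed

lemma rconj_cube_roots: "y \<in> cube_roots \<Longrightarrow> g \<in> carrier G \<Longrightarrow> rconj G y g \<in> cube_roots"
  using rconj_mult[of "y \<otimes> y" y g] rconj_mult[of y y g] by (simp add: cube_roots_def rconj_def)

lemma normal_closure_subset_cube_roots: "x \<in> cube_roots \<Longrightarrow> normal_closure x \<subseteq> cube_roots"
  unfolding normal_closure_def
  by (rule generate_subgroup_incl[OF _ subgroup_cube_roots]) (auto simp: rconj_cube_roots)

lemma exp3_comm_group_normal_closure:
  assumes x: "x \<in> cube_roots"
  shows "exp3_comm_group (G\<lparr>carrier := normal_closure x\<rparr>)"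
proof -
  let ?C = "(\<lambda>g. rconj G x g) ` carrier G"
  have xc: "x \<in> carrier G" using x by (rule cube_roots_carrier)
  have C: "?C \<subseteq> carrier G" using xc by auto
  have N: "normal_closure x \<subseteq> carrier G"
    using subgroup.subset[OF subgroup_normal_closure[OF xc]] .
  have C_comm: "n \<otimes> c = c \<otimes> n" if c: "c \<in> ?C" and n: "n \<in> normal_closure x" for c n
  proof (rule commutes_generate[OF _ C _ n[unfolded normal_closure_def]])
    show "c \<in> carrier G" using c C by blast
    fix s assume "s \<in> ?C"
    with c show "s \<otimes> c = c \<otimes> s" by (auto intro: rconjs_commute[OF x])
  qed
  have N_comm: "n \<otimes> m = m \<otimes> n" if n: "n \<in> normal_closure x" and m: "m \<in> normal_closure x" for n m
  proof (rule commutes_generate[OF _ C _ n[unfolded normal_closure_def]])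
    show "m \<in> carrier G" using m N by blast
    fix s assume "s \<in> ?C"
    then show "s \<otimes> m = m \<otimes> s" using C_comm[OF _ m] by simp
  qed
  show ?thesis
  proof (intro exp3_comm_group.intro exp3_comm_group_axioms.intro group.group_comm_groupI)
    show "group (G\<lparr>carrier := normal_closure x\<rparr>)"
      by (rule subgroup.subgroup_is_group[OF subgroup_normal_closure[OF xc] is_group])
  qed (use N_comm normal_closure_subset_cube_roots[OF x] in \<open>auto simp: cube_roots_def\<close>)
qed

lemma norm_trivial_rconj:
  assumes x: "x \<in> cube_roots" and g: "g \<in> carrier G"
  shows "norm_trivial (G\<lparr>carrier := normal_closure x\<rparr>) (\<lambda>y. rconj G y g)"
  using normal_closure_subset_cube_roots[OF x] g norm_rconj_trivial
  by (auto simp: norm_trivial_def)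

lemma comm3_swap_mult_eq_one:
  assumes x: "x \<in> cube_roots" and a: "a \<in> carrier G" and b: "b \<in> carrier G"
  shows "comm3 G x b a \<otimes> comm3 G x a b = \<one>"
proof -
  let ?N = "normal_closure x"
  let ?H = "G\<lparr>carrier := ?N\<rparr>"
  define conj_by where "conj_by g = (\<lambda>y. rconj G y g)" for g
  interpret H: exp3_comm_group ?H by (rule exp3_comm_group_normal_closure[OF x])
  have xc: "x \<in> carrier G" using x by (rule cube_roots_carrier)
  have sub: "subgroup ?N G" by (rule subgroup_normal_closure[OF xc])
  have Nc: "y \<in> carrier G" if "y \<in> ?N" for y using that subgroup.subset[OF sub] by blast
  have hom: "conj_by g \<in> hom ?H ?H" if "g \<in> carrier G" for g
    using that xc by (auto intro!: homI simp: conj_by_def rconj_normal_closure rconj_mult Nc)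
  have inverse: "conj_by g (conj_by (inv g) y) = y" if "g \<in> carrier G" "y \<in> carrier ?H" for g y
    using that by (simp add: conj_by_def rconj_rconj Nc)
  have norm1: "norm_trivial ?H (conj_by g)" if "g \<in> carrier G" for g
    using norm_trivial_rconj[OF x that] by (simp add: conj_by_def)
  have norm: "norm_trivial ?H (conj_by h \<circ> conj_by g)" if "g \<in> carrier G" "h \<in> carrier G" for g h
    by (rule norm_trivial_cong[OF _ _ norm1[of "g \<otimes> h"]])
      (use that in \<open>auto simp: conj_by_def rconj_rconj Nc rconj_normal_closure[OF xc]\<close>)
  have "deviation ?H (conj_by a) (deviation ?H (conj_by b) x) \<otimes>\<^bsub>?H\<^esub> deviation ?H (conj_by b) (deviation ?H (conj_by a) x) = \<one>\<^bsub>?H\<^esub>"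
    by (rule H.deviations_anticommute[OF hom hom inverse hom hom inverse norm1 norm1 norm norm norm])
       (use a b mem_normal_closure[OF xc] in auto)
  then show ?thesis
    using a b xc sub mem_normal_closure[OF xc] H.deviation_closed[OF hom] Nc
    by (simp add: comm3_def comm_eq_deviation deviation_subgroup conj_by_def)
qed

end

theorem lemma3p1:
  fixes G (structure)
  assumes "is_p_group 3 G"
    and "semi_p_abelian 3 G"
    and "x \<in> Omega1 3 G"
    and "a \<in> carrier G" and "b \<in> carrier G"
  shows "comm3 G x b a \<otimes>\<^bsub>G\<^esub> comm3 G x a b = \<one>\<^bsub>G\<^esub>"
proof -
  interpret semi_3_abelian_group G
    using assms(1,2) by (simp add: is_p_group_def semi_3_abelian_group_def semi_3_abelian_group_axioms_def)
  show ?thesis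
    using comm3_swap_mult_eq_one Omega1_subset_cube_roots assms(3-5) by blast
qed

end
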